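(* Let $C=L_1;\ldots;L_d$ be a sorting network on $n$ channels of depth $d$ that contains no redundant comparators. Then for every $k$ with $1\le k<d$ and every comparator $(i,j)\in L_k$, the comparator $(i,j)$ connects adjacent $k$-blocks of $C$; that is, every channel $m$ with $i<m<j$ belongs either to the $k$-block containing $i$ or to the $k$-block containing $j$.
   Context: Channels are numbered $1,\ldots,n$. A comparator network on $n$ channels of depth $d$ is a sequence $C=L_1;\ldots;L_d$ of layers; each layer is a set of comparators $(i,j)$ with $1\le i<j\le n$, and each channel occurs in at most one comparator of a given layer. An input $\bar x\in\{0,1\}^n$ propagates through $C$ as follows: $\bar x_0=\bar x$, and for $0<k\le d$, $\bar x_k$ is obtained from $\bar x_{k-1}$ by, for each comparator $(i,j)\in L_k$, putting the minimum of the values at positions $i,j$ of $\bar x_{k-1}$ at position $i$ and the maximum at position $j$ (other positions unchanged). The output is $C(\bar x)=\bar x_d$. $C$ is a sorting network if $C(\bar x)$ is sorted in non-decreasing order for every $\bar x\in\{0,1\}^n$. A comparator $(i,j)$ in layer $L_\ell$ is redundant if for every input $\bar x\in\{0,1\}^n$ the entries of $\bar x_{\ell-1}$ at positions $i$ and $j$ satisfy $(\bar x_{\ell-1})_i\le(\bar x_{\ell-1})_j$. For $0\le k<d$, the $k$-blocks of $C$ are the vertex sets of the connected components of the graph on the channels $\{1,\ldots,n\}$ having an edge $\{i,j\}$ for every comparator $(i,j)$ occurring in some layer $L_{k'}$ with $k'>k$; thus the $k$-blocks partition the set of channels. *)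

theory Defs
  imports Main
begin

type_synonym layer = "(nat \<times> nat) set"
type_synonym network = "layer list"  (* L_1 ; ... ; L_d  is  C ! 0, ..., C ! (d-1) *)

definition is_layer :: "nat \<Rightarrow> layer \<Rightarrow> bool" where
  "is_layer n L \<longleftrightarrow>
     (\<forall>(i,j)\<in>L. 1 \<le> i \<and> i < j \<and> j \<le> n) \<and>
     (\<forall>(i,j)\<in>L. \<forall>(i',j')\<in>L. {i,j} \<inter> {i',j'} \<noteq> {} \<longrightarrow> (i,j) = (i',j'))"

definition is_network :: "nat \<Rightarrow> network \<Rightarrow> bool" where
  "is_network n C \<longleftrightarrow> (\<forall>L\<in>set C. is_layer n L)"

definition binary_input :: "nat \<Rightarrow> (nat \<Rightarrow> nat) \<Rightarrow> bool" where
  "binary_input n x \<longleftrightarrow> (\<forall>p. x p \<in> {0,1}) \<and> (\<forall>p. p \<notin> {1..n} \<longrightarrow> x p = 0)"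

definition apply_layer :: "layer \<Rightarrow> (nat \<Rightarrow> nat) \<Rightarrow> (nat \<Rightarrow> nat)" where
  "apply_layer L x = (\<lambda>p.
     if (\<exists>q. (p,q) \<in> L) then min (x p) (x (THE q. (p,q) \<in> L))
     else if (\<exists>q. (q,p) \<in> L) then max (x (THE q. (q,p) \<in> L)) (x p)
     else x p)"

definition run_prefix :: "network \<Rightarrow> nat \<Rightarrow> (nat \<Rightarrow> nat) \<Rightarrow> (nat \<Rightarrow> nat)" where
  "run_prefix C k x = foldl (\<lambda>y L. apply_layer L y) x (take k C)"

definition sorting_network :: "nat \<Rightarrow> network \<Rightarrow> bool" where
  "sorting_network n C \<longleftrightarrow> is_network n C \<and>
     (\<forall>x. binary_input n x \<longrightarrow>
        (\<forall>i j. 1 \<le> i \<and> i \<le> j \<and> j \<le> n \<longrightarrow>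
           run_prefix C (length C) x i \<le> run_prefix C (length C) x j))"

definition redundant :: "nat \<Rightarrow> network \<Rightarrow> nat \<Rightarrow> nat \<Rightarrow> nat \<Rightarrow> bool" where
  "redundant n C l i j \<longleftrightarrow>
     (\<forall>x. binary_input n x \<longrightarrow> run_prefix C (l - 1) x i \<le> run_prefix C (l - 1) x j)"

definition later_edges :: "network \<Rightarrow> nat \<Rightarrow> (nat \<times> nat) set" where
  "later_edges C k = (\<Union>k'\<in>{k+1..length C}. C ! (k' - 1))"

definition kblock :: "nat \<Rightarrow> network \<Rightarrow> nat \<Rightarrow> nat \<Rightarrow> nat set" where
  "kblock n C k i = {m \<in> {1..n}. (i, m) \<in> (later_edges C k \<union> (later_edges C k)\<inverse>)\<^sup>*}"

end

theory Submission
  imports Defs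
begin

text \<open>
  By downward induction on k, the comparators of the layers after L_k connect adjacent blocks,
  so every k-block is an interval of channels. Suppose a comparator (i, j) of L_k skips a channel m
  lying in neither the block of i nor that of j; then the block of i lies below m and the block of
  j above m. The layers after L_k only permute values inside k-blocks, and a 0-1 input of weight
  n - m or n - m + 1 is sorted to 0 below m and 1 above m; hence on such inputs the comparator must
  output 0 on i and 1 on j, i.e. exactly one of i, j carries a 1 before L_k. Since the values before
  L_k depend monotonically on the input, an exchange argument moves an input witnessing
  non-redundancy (1 on i, 0 on j) to the sorted input with ones on m..n, which the first k - 1
  layers leave unchanged and which is 0 on i: a contradiction.
\<close>

lemma is_layer_bounds:
  assumes "is_layer n L" "(i, j) \<in> L"
  shows "1 \<le> i" "i < j" "j \<le> n"
  using assms unfolding is_layer_def by fast+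

lemma is_layer_disjoint:
  assumes "is_layer n L" "(i, j) \<in> L" "(i', j') \<in> L" "{i, j} \<inter> {i', j'} \<noteq> {}"
  shows "(i, j) = (i', j')"
  using assms unfolding is_layer_def by fast

definition partner :: "layer \<Rightarrow> nat \<Rightarrow> nat" where
  "partner L c = (if \<exists>q. (c, q) \<in> L then THE q. (c, q) \<in> L
                  else if \<exists>q. (q, c) \<in> L then THE q. (q, c) \<in> L else c)"

lemma apply_layer_partner:
  "apply_layer L v c = (if \<exists>q. (c, q) \<in> L then min (v c) (v (partner L c))
     else if \<exists>q. (q, c) \<in> L then max (v (partner L c)) (v c) else v c)"
  by (simp add: apply_layer_def partner_def)

lemma apply_layer_comparator:
  assumes L: "is_layer n L" and ij: "(i, j) \<in> L"
  shows "partner L i = j" "partner L j = i"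
    "apply_layer L v i = min (v i) (v j)" "apply_layer L v j = max (v i) (v j)"
proof -
  have i_lower: "\<exists>q. (i, q) \<in> L" and j_upper: "\<exists>q. (q, j) \<in> L" using ij by blast+
  have j_not_lower: "\<nexists>q. (j, q) \<in> L"
    using is_layer_disjoint[OF L ij] is_layer_bounds(2)[OF L ij] by blast
  have "(THE q. (i, q) \<in> L) = j" "(THE q. (q, j) \<in> L) = i"
    using ij is_layer_disjoint[OF L ij] by (auto intro!: the1_equality)
  with i_lower j_upper j_not_lower show "partner L i = j" "partner L j = i"
    "apply_layer L v i = min (v i) (v j)" "apply_layer L v j = max (v i) (v j)"
    by (simp_all add: partner_def apply_layer_def)
qed

lemma apply_layer_idle:
  assumes "\<nexists>q. (c, q) \<in> L" "\<nexists>q. (q, c) \<in> L"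
  shows "partner L c = c" "apply_layer L v c = v c"
  using assms by (simp_all add: partner_def apply_layer_def)

lemma layer_channel_cases [case_names lower upper idle]:
  obtains (lower) q where "(c, q) \<in> L"
  | (upper) p where "(p, c) \<in> L"
  | (idle) "\<nexists>q. (c, q) \<in> L" "\<nexists>q. (q, c) \<in> L"
  by blast

lemma partner_partner:
  assumes "is_layer n L"
  shows "partner L (partner L c) = c"
  by (cases c L rule: layer_channel_cases)
     (simp_all add: apply_layer_comparator[OF assms] apply_layer_idle)

lemma partner_in_channels:
  assumes "is_layer n L" "c \<in> {1..n}"
  shows "partner L c \<in> {1..n}"
  using assms
  by (cases c L rule: layer_channel_cases)
     (auto simp: apply_layer_comparator[OF assms(1)] apply_layer_idle dest: is_layer_bounds[OF assms(1)])

lemma partner_closed: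
  assumes "is_layer n L" "\<And>p q. (p, q) \<in> L \<Longrightarrow> p \<in> B \<longleftrightarrow> q \<in> B" "c \<in> B"
  shows "partner L c \<in> B"
  using assms
  by (cases c L rule: layer_channel_cases) (auto simp: apply_layer_comparator[OF assms(1)] apply_layer_idle)

lemma apply_layer_add_partner:
  assumes "is_layer n L"
  shows "apply_layer L v c + apply_layer L v (partner L c) = v c + v (partner L c)"
  by (cases c L rule: layer_channel_cases)
     (simp_all add: apply_layer_comparator[OF assms] apply_layer_idle)

lemma apply_layer_cases: "apply_layer L v c = v c \<or> apply_layer L v c = v (partner L c)"
  by (simp add: apply_layer_partner min_def max_def)

lemma apply_layer_cases_inverse:
  assumes "is_layer n L"
  shows "v c = apply_layer L v c \<or> v c = apply_layer L v (partner L c)"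
  by (cases c L rule: layer_channel_cases)
     (auto simp: apply_layer_comparator[OF assms] apply_layer_idle min_def max_def)

lemma sum_apply_layer:
  assumes L: "is_layer n L"
  shows "(\<Sum>c\<in>{1..n}. apply_layer L v c) = (\<Sum>c\<in>{1..n}. v c)"
proof -
  have reindex: "(\<Sum>c\<in>{1..n}. f (partner L c)) = (\<Sum>c\<in>{1..n}. f c)" for f :: "nat \<Rightarrow> nat"
    by (rule sum.reindex_bij_witness[of _ "partner L" "partner L"])
       (use partner_partner[OF L] partner_in_channels[OF L] in blast)+
  have "2 * (\<Sum>c\<in>{1..n}. apply_layer L v c)
      = (\<Sum>c\<in>{1..n}. apply_layer L v c + apply_layer L v (partner L c))"
    by (simp only: sum.distrib reindex mult_2)
  also have "\<dots> = (\<Sum>c\<in>{1..n}. v c + v (partner L c))"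
    by (simp add: apply_layer_add_partner[OF L])
  also have "\<dots> = 2 * (\<Sum>c\<in>{1..n}. v c)"
    by (simp only: sum.distrib reindex mult_2)
  finally show ?thesis by simp
qed

lemma apply_layer_mono:
  assumes "\<And>c. v c \<le> w c"
  shows "apply_layer L v c \<le> apply_layer L w c"
proof -
  have "min (v c) (v (partner L c)) \<le> min (w c) (w (partner L c))"
    and "max (v (partner L c)) (v c) \<le> max (w (partner L c)) (w c)"
    by (intro min.mono max.mono assms)+
  with assms[of c] show ?thesis by (simp add: apply_layer_partner)
qed

lemma apply_layer_sorted:
  assumes L: "is_layer n L" and sorted: "\<And>p q. 1 \<le> p \<Longrightarrow> p \<le> q \<Longrightarrow> q \<le> n \<Longrightarrow> v p \<le> v q"
  shows "apply_layer L v = v"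
proof
  fix c
  show "apply_layer L v c = v c"
  proof (cases c L rule: layer_channel_cases)
    case (lower q)
    then show ?thesis
      using apply_layer_comparator[OF L lower] is_layer_bounds[OF L lower] sorted[of c q] by simp
  next
    case (upper p)
    then show ?thesis
      using apply_layer_comparator[OF L upper] is_layer_bounds[OF L upper] sorted[of p c] by simp
  next
    case idle
    then show ?thesis by (rule apply_layer_idle)
  qed
qed

lemma apply_layer_image:
  assumes L: "is_layer n L" and closed: "\<And>p q. (p, q) \<in> L \<Longrightarrow> p \<in> B \<longleftrightarrow> q \<in> B"
  shows "apply_layer L v ` B = v ` B"
proof (intro equalityI image_subsetI)
  fix c assume "c \<in> B"
  with partner_closed[OF L closed this] show "apply_layer L v c \<in> v ` B"
    using apply_layer_cases[of L v c] by auto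
  from partner_closed[OF L closed \<open>c \<in> B\<close>] \<open>c \<in> B\<close> show "v c \<in> apply_layer L v ` B"
    using apply_layer_cases_inverse[OF L, of v c] by auto
qed

definition run_layers :: "layer list \<Rightarrow> (nat \<Rightarrow> nat) \<Rightarrow> nat \<Rightarrow> nat" where
  "run_layers Ls x = foldl (\<lambda>y L. apply_layer L y) x Ls"

lemma run_layers_simps [simp]:
  "run_layers [] x = x"
  "run_layers (L # Ls) x = run_layers Ls (apply_layer L x)"
  "run_layers (Ls @ Ms) x = run_layers Ms (run_layers Ls x)"
  by (simp_all add: run_layers_def)

lemma run_prefix_eq_run_layers: "run_prefix C k x = run_layers (take k C) x"
  by (simp add: run_prefix_def run_layers_def)

lemma run_layers_mono: "(\<And>c. x c \<le> y c) \<Longrightarrow> run_layers Ls x c \<le> run_layers Ls y c"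
  by (induction Ls arbitrary: x y) (simp_all add: apply_layer_mono)

lemma run_layers_binary: "(\<And>c. x c \<in> {0, 1}) \<Longrightarrow> run_layers Ls x c \<in> {0, 1}"
proof (induction Ls arbitrary: x)
  case (Cons L Ls)
  have "apply_layer L x c \<in> {0, 1}" for c
    using apply_layer_cases[of L x c] Cons.prems by metis
  then show ?case using Cons.IH by simp
qed simp

lemma sum_run_layers:
  "(\<And>L. L \<in> set Ls \<Longrightarrow> is_layer n L) \<Longrightarrow> (\<Sum>c\<in>{1..n}. run_layers Ls x c) = (\<Sum>c\<in>{1..n}. x c)"
proof (induction Ls arbitrary: x)
  case (Cons L Ls)
  then show ?case using sum_apply_layer[of n L x] by simp
qed simp

lemma run_layers_sorted:
  assumes "\<And>L. L \<in> set Ls \<Longrightarrow> is_layer n L"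
    and "\<And>p q. 1 \<le> p \<Longrightarrow> p \<le> q \<Longrightarrow> q \<le> n \<Longrightarrow> x p \<le> x q"
  shows "run_layers Ls x = x"
  using assms(1)
proof (induction Ls)
  case (Cons L Ls)
  have "apply_layer L x = x" by (rule apply_layer_sorted[of n]) (use Cons.prems assms(2) in auto)
  with Cons show ?case by simp
qed simp

lemma run_layers_image:
  assumes "\<And>L. L \<in> set Ls \<Longrightarrow> is_layer n L"
    and "\<And>L p q. L \<in> set Ls \<Longrightarrow> (p, q) \<in> L \<Longrightarrow> p \<in> B \<longleftrightarrow> q \<in> B"
  shows "run_layers Ls x ` B = x ` B"
  using assms
proof (induction Ls arbitrary: x)
  case (Cons L Ls)
  have "run_layers Ls (apply_layer L x) ` B = apply_layer L x ` B"
    by (rule Cons.IH) (use Cons.prems in auto)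
  also have "\<dots> = x ` B" by (rule apply_layer_image[of n]) (use Cons.prems in auto)
  finally show ?case by simp
qed simp

definition indicator_input :: "nat set \<Rightarrow> nat \<Rightarrow> nat" where
  "indicator_input X p = of_bool (p \<in> X)"

lemma binary_input_indicator_input: "X \<subseteq> {1..n} \<Longrightarrow> binary_input n (indicator_input X)"
  by (auto simp: binary_input_def indicator_input_def)

lemma binary_inputE:
  assumes "binary_input n x"
  obtains X where "X \<subseteq> {1..n}" "x = indicator_input X"
proof
  show "{p. x p = 1} \<subseteq> {1..n}" and "x = indicator_input {p. x p = 1}"
    using assms by (fastforce simp: binary_input_def indicator_input_def)+
qed

lemma sum_indicator_input: "X \<subseteq> {1..n} \<Longrightarrow> (\<Sum>c\<in>{1..n}. indicator_input X c) = card X"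
  by (simp add: indicator_input_def Int_absorb1 flip: sum.inter_filter)

lemma sorted_binary_threshold:
  fixes v :: "nat \<Rightarrow> nat"
  assumes binary: "\<And>c. c \<in> {1..n} \<Longrightarrow> v c \<in> {0, 1}"
    and sorted: "\<And>p q. 1 \<le> p \<Longrightarrow> p \<le> q \<Longrightarrow> q \<le> n \<Longrightarrow> v p \<le> v q"
    and c: "c \<in> {1..n}"
  shows "v c = of_bool (n + 1 \<le> c + (\<Sum>p\<in>{1..n}. v p))"
proof -
  define U where "U = {p \<in> {1..n}. v p = 1}"
  have "(\<Sum>p\<in>{1..n}. v p) = (\<Sum>p\<in>{1..n}. of_bool (v p = 1))"
    by (rule sum.cong) (use binary in auto)
  also have "\<dots> = card U"
    by (simp add: U_def Int_def flip: sum.inter_filter)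
  finally have weight: "(\<Sum>p\<in>{1..n}. v p) = card U" .
  show ?thesis
  proof (cases "v c = 1")
    case True
    have "{c..n} \<subseteq> U"
    proof
      fix p assume "p \<in> {c..n}"
      with c sorted[of c p] binary[of p] True show "p \<in> U" by (auto simp: U_def)
    qed
    then have "card {c..n} \<le> card U" by (intro card_mono) (auto simp: U_def)
    with True weight show ?thesis by simp
  next
    case False
    then have "v c = 0" using binary c by auto
    then have "U \<subseteq> {c+1..n}"
      using sorted[of _ c] c by (force simp: U_def not_less_eq_eq)
    then have "card U \<le> card {c+1..n}" by (intro card_mono) auto
    with \<open>v c = 0\<close> weight c show ?thesis by auto
  qed
qed

lemma sorting_network_output:
  assumes sn: "sorting_network n C" and X: "X \<subseteq> {1..n}" and c: "c \<in> {1..n}"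
  shows "run_prefix C (length C) (indicator_input X) c = of_bool (n + 1 \<le> c + card X)"
proof -
  let ?y = "run_prefix C (length C) (indicator_input X)"
  have layers: "\<And>L. L \<in> set C \<Longrightarrow> is_layer n L"
    using sn by (simp add: sorting_network_def is_network_def)
  have "?y c = of_bool (n + 1 \<le> c + (\<Sum>p\<in>{1..n}. ?y p))"
  proof (rule sorted_binary_threshold[OF _ _ c])
    show "?y p \<in> {0, 1}" for p
      unfolding run_prefix_eq_run_layers by (rule run_layers_binary) (simp add: indicator_input_def)
    show "?y p \<le> ?y q" if "1 \<le> p" "p \<le> q" "q \<le> n" for p q
      using sn binary_input_indicator_input[OF X] that unfolding sorting_network_def by blast
  qed
  moreover have "(\<Sum>p\<in>{1..n}. ?y p) = card X"
    using sum_run_layers[of "take (length C) C" n] layers sum_indicator_input[OF X]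
    by (simp add: run_prefix_eq_run_layers)
  ultimately show ?thesis by simp
qed

lemma monotone_pair_exchange:
  fixes f g :: "'a set \<Rightarrow> bool"
  assumes U: "finite U"
    and f_mono: "\<And>X Y. X \<subseteq> Y \<Longrightarrow> Y \<subseteq> U \<Longrightarrow> f X \<Longrightarrow> f Y"
    and g_mono: "\<And>X Y. X \<subseteq> Y \<Longrightarrow> Y \<subseteq> U \<Longrightarrow> g X \<Longrightarrow> g Y"
    and upper: "\<And>X. X \<subseteq> U \<Longrightarrow> card X = Suc w \<Longrightarrow> f X \<Longrightarrow> \<not> g X"
    and lower: "\<And>X. X \<subseteq> U \<Longrightarrow> card X = w \<Longrightarrow> \<not> g X \<Longrightarrow> f X"
    and S: "S \<subseteq> U" "card S = Suc w" "f S"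
    and T: "T \<subseteq> U" "card T = Suc w"
  shows "f T"
  using S
proof (induction "card (S - T)" arbitrary: S)
  case 0
  have fin: "finite S" "finite T" using 0(2) T(1) U finite_subset by blast+
  with 0(1) have "S \<subseteq> T" by simp
  with fin(2) 0(3) T(2) have "S = T" by (simp add: card_subset_eq)
  with 0 show ?case by simp
next
  case (Suc N)
  have fin: "finite S" "finite T" using Suc.prems(1) T(1) U finite_subset by blast+
  have "S - T \<noteq> {}"
  proof
    assume "S - T = {}"
    with Suc.hyps(2) show False by simp
  qed
  then obtain a where a: "a \<in> S" "a \<notin> T" by blast
  have "\<not> T \<subseteq> S"
  proof
    assume "T \<subseteq> S"
    with fin(1) Suc.prems(2) T(2) have "T = S" by (simp add: card_subset_eq)
    with a show False by blast
  qed
  then obtain b where b: "b \<in> T" "b \<notin> S" by blast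
  have "\<not> g S" using upper Suc.prems by blast
  then have "\<not> g (S - {a})" using g_mono[of "S - {a}" S] Suc.prems(1) by blast
  then have "f (S - {a})" using lower[of "S - {a}"] Suc.prems a fin by auto
  then have "f (insert b (S - {a}))" using f_mono[of "S - {a}"] Suc.prems(1) b T(1) by blast
  moreover have "card (insert b (S - {a})) = Suc w" using Suc.prems(2) a b fin by simp
  moreover have "card (insert b (S - {a}) - T) = N"
    using Suc.hyps(2) a b by (simp add: Diff_insert2 [symmetric] insert_Diff_if)
  ultimately show ?case using Suc.hyps(1) Suc.prems(1) b T(1) by blast
qed

lemma monotone_pair_weight:
  fixes f g :: "'a set \<Rightarrow> bool"
  assumes U: "finite U"
    and f_mono: "\<And>X Y. X \<subseteq> Y \<Longrightarrow> Y \<subseteq> U \<Longrightarrow> f X \<Longrightarrow> f Y"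
    and g_mono: "\<And>X Y. X \<subseteq> Y \<Longrightarrow> Y \<subseteq> U \<Longrightarrow> g X \<Longrightarrow> g Y"
    and upper: "\<And>X. X \<subseteq> U \<Longrightarrow> card X = Suc w \<Longrightarrow> f X \<Longrightarrow> \<not> g X"
    and lower: "\<And>X. X \<subseteq> U \<Longrightarrow> card X = w \<Longrightarrow> \<not> g X \<Longrightarrow> f X"
    and X: "X \<subseteq> U" "f X" "\<not> g X"
    and T: "T \<subseteq> U" "card T = Suc w"
  shows "f T"
proof -
  have "Suc w \<le> card U" using card_mono[OF U T(1)] T(2) by simp
  obtain S where S: "S \<subseteq> U" "card S = Suc w" "f S"
  proof (cases "card X \<le> Suc w")
    case True
    then obtain S where "X \<subseteq> S" "S \<subseteq> U" "card S = Suc w"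
      using exists_subset_between[OF _ \<open>Suc w \<le> card U\<close> X(1) U] by blast
    with X(2) f_mono that show ?thesis by blast
  next
    case False
    then have "w \<le> card X" by simp
    then obtain Y where Y: "Y \<subseteq> X" "card Y = w"
      using obtain_subset_with_card_n by blast
    with X have "Y \<subseteq> U" "f Y" using g_mono lower by blast+
    then obtain S where "Y \<subseteq> S" "S \<subseteq> U" "card S = Suc w"
      using exists_subset_between[of Y "Suc w" U] Y(2) \<open>Suc w \<le> card U\<close> \<open>Y \<subseteq> U\<close> U by auto
    with \<open>f Y\<close> f_mono that show ?thesis by blast
  qed
  from monotone_pair_exchange[of U f g w S T] assms S show ?thesis by blast
qed

abbreviation later_reach :: "network \<Rightarrow> nat \<Rightarrow> (nat \<times> nat) set" where
  "later_reach C k \<equiv> (later_edges C k \<union> (later_edges C k)\<inverse>)\<^sup>*"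

lemma later_edges_antimono: "k \<le> k' \<Longrightarrow> later_edges C k' \<subseteq> later_edges C k"
  unfolding later_edges_def by (intro UN_mono) auto

lemma set_drop_subset_later_edges:
  assumes "L \<in> set (drop k C)"
  shows "L \<subseteq> later_edges C k"
proof -
  from assms obtain t where "t < length (drop k C)" "L = drop k C ! t"
    by (auto simp: in_set_conv_nth)
  then have "k + t < length C" "L = C ! (k + t)" by auto
  then show ?thesis unfolding later_edges_def by (intro subsetI UN_I[of "k + t + 1"]) auto
qed

lemma kblock_subset: "kblock n C k c \<subseteq> {1..n}"
  by (auto simp: kblock_def)

lemma mem_kblock_self: "c \<in> {1..n} \<Longrightarrow> c \<in> kblock n C k c"
  by (simp add: kblock_def)

lemma kblock_closed:
  assumes "is_network n C" "L \<in> set (drop k C)" "(p, q) \<in> L"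
  shows "p \<in> kblock n C k c \<longleftrightarrow> q \<in> kblock n C k c"
proof -
  have L: "is_layer n L" using assms(1,2) by (auto simp: is_network_def dest: in_set_dropD)
  have "p \<in> {1..n}" "q \<in> {1..n}" using is_layer_bounds[OF L assms(3)] by auto
  moreover have "(p, q) \<in> later_edges C k" using set_drop_subset_later_edges[OF assms(2)] assms(3) by blast
  ultimately show ?thesis
    unfolding kblock_def by (blast intro: rtrancl_into_rtrancl)
qed

lemma run_prefix_image_kblock:
  assumes "is_network n C"
  shows "run_prefix C (length C) x ` kblock n C k c = run_prefix C k x ` kblock n C k c"
proof -
  have "run_prefix C (length C) x = run_layers (drop k C) (run_prefix C k x)"
    by (simp add: run_prefix_eq_run_layers flip: run_layers_simps(3))
  moreover have "run_layers (drop k C) y ` kblock n C k c = y ` kblock n C k c" for y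
    using assms kblock_closed[OF assms]
    by (intro run_layers_image[of _ n]) (auto simp: is_network_def dest: in_set_dropD)
  ultimately show ?thesis by simp
qed

lemma run_prefix_last_layer:
  "1 \<le> k \<Longrightarrow> k \<le> length C \<Longrightarrow>
     run_prefix C k x = apply_layer (C ! (k - 1)) (run_prefix C (k - 1) x)"
  by (cases k) (simp_all add: run_prefix_def take_Suc_conv_app_nth)

lemma separated_comparator_exclusive:
  assumes sn: "sorting_network n C" and k: "1 \<le> k" "k \<le> length C"
    and ij: "(i, j) \<in> C ! (k - 1)"
    and below: "\<forall>c\<in>kblock n C k i. c < m" and above: "\<forall>c\<in>kblock n C k j. m < c"
    and X: "X \<subseteq> {1..n}" "n - m \<le> card X" "card X \<le> Suc (n - m)"
  shows "run_prefix C (k - 1) (indicator_input X) i = 1 \<longleftrightarrow>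
         run_prefix C (k - 1) (indicator_input X) j = 0"
proof -
  let ?x = "indicator_input X" and ?y = "run_prefix C (k - 1) (indicator_input X)" and ?sorted = "\<lambda>p. of_bool (n + 1 \<le> p + card X) :: nat"
  have net: "is_network n C" using sn by (simp add: sorting_network_def)
  have L: "is_layer n (C ! (k - 1))" using net k by (simp add: is_network_def)
  have i: "i \<in> {1..n}" and j: "j \<in> {1..n}" using is_layer_bounds[OF L ij] by auto
  have "m < j" "j \<le> n" using above mem_kblock_self[OF j] j by auto
  have after_layer: "run_prefix C k ?x c \<in> ?sorted ` kblock n C k c" if "c \<in> {1..n}" for c
  proof -
    have "run_prefix C k ?x c \<in> run_prefix C (length C) ?x ` kblock n C k c"
      using run_prefix_image_kblock[OF net] mem_kblock_self[OF that] by blast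
    also have "\<dots> = ?sorted ` kblock n C k c"
      by (intro image_cong refl sorting_network_output[OF sn X(1)]) (use kblock_subset in blast)
    finally show ?thesis .
  qed
  have "run_prefix C k ?x i = 0"
    using after_layer[OF i] below X \<open>m < j\<close> \<open>j \<le> n\<close> by auto
  moreover have "run_prefix C k ?x j = 1"
    using after_layer[OF j] above X \<open>m < j\<close> \<open>j \<le> n\<close> by auto
  moreover have "run_prefix C k ?x i = min (?y i) (?y j)" "run_prefix C k ?x j = max (?y i) (?y j)"
    using run_prefix_last_layer[OF k] apply_layer_comparator(3,4)[OF L ij] by simp_all
  moreover have "?y c \<in> {0, 1}" for c
    unfolding run_prefix_eq_run_layers by (rule run_layers_binary) (simp add: indicator_input_def)
  ultimately show ?thesis by (auto simp: min_def max_def split: if_splits)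
qed

lemma separated_comparator_redundant:
  assumes sn: "sorting_network n C" and k: "1 \<le> k" "k \<le> length C"
    and ij: "(i, j) \<in> C ! (k - 1)"
    and below: "\<forall>c\<in>kblock n C k i. c < m" and above: "\<forall>c\<in>kblock n C k j. m < c"
  shows "redundant n C k i j"
  unfolding redundant_def
proof (intro allI impI)
  fix x assume "binary_input n x"
  then obtain X0 where X0: "X0 \<subseteq> {1..n}" and x: "x = indicator_input X0" by (rule binary_inputE)
  define y where "y X = run_prefix C (k - 1) (indicator_input X)" for X
  have layers: "\<And>L. L \<in> set C \<Longrightarrow> is_layer n L"
    using sn by (simp add: sorting_network_def is_network_def)
  have "is_layer n (C ! (k - 1))" using layers k by simp
  from is_layer_bounds[OF this ij] have i: "i \<in> {1..n}" and j: "j \<in> {1..n}" by auto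
  have "i < m" "m < j" using below above mem_kblock_self i j by blast+
  have y_binary: "y X c \<in> {0, 1}" for X c
    unfolding y_def run_prefix_eq_run_layers by (rule run_layers_binary) (simp add: indicator_input_def)
  have y_mono: "y X c \<le> y Y c" if "X \<subseteq> Y" for X Y c
    unfolding y_def run_prefix_eq_run_layers
    by (rule run_layers_mono) (use that in \<open>auto simp: indicator_input_def\<close>)
  have y_sorted_input: "y {m..n} = indicator_input {m..n}"
    unfolding y_def run_prefix_eq_run_layers
    by (rule run_layers_sorted[of _ n]) (auto simp: indicator_input_def dest: in_set_takeD layers)
  show "run_prefix C (k - 1) x i \<le> run_prefix C (k - 1) x j"
  proof (rule ccontr)
    assume "\<not> run_prefix C (k - 1) x i \<le> run_prefix C (k - 1) x j"
    then have "y X0 i = 1" "y X0 j \<noteq> 1" using y_binary[of X0 i] y_binary[of X0 j] unfolding x y_def by auto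
    have exclusive: "y X i = 1 \<longleftrightarrow> y X j \<noteq> 1"
      if "X \<subseteq> {1..n}" "n - m \<le> card X" "card X \<le> Suc (n - m)" for X
      using separated_comparator_exclusive[OF sn k ij below above that] y_binary[of X j]
      unfolding y_def by auto
    have "y {m..n} i = 1"
    proof (rule monotone_pair_weight[where f = "\<lambda>X. y X i = 1" and g = "\<lambda>X. y X j = 1"
          and U = "{1..n}" and w = "n - m" and X = X0 and T = "{m..n}"])
      have y_one_mono: "y Y c = 1" if "X \<subseteq> Y" "y X c = 1" for X Y c
        using y_mono[OF that(1), of c] y_binary[of Y c] that(2) by auto
      show "y Y i = 1" if "X \<subseteq> Y" "y X i = 1" for X Y
        using y_one_mono that by blast
      show "y Y j = 1" if "X \<subseteq> Y" "y X j = 1" for X Y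
        using y_one_mono that by blast
      show "y X i = 1 \<Longrightarrow> \<not> y X j = 1" if "X \<subseteq> {1..n}" "card X = Suc (n - m)" for X
        using exclusive that by simp
      show "\<not> y X j = 1 \<Longrightarrow> y X i = 1" if "X \<subseteq> {1..n}" "card X = n - m" for X
        using exclusive that by simp
      show "{m..n} \<subseteq> {1..n}" "card {m..n} = Suc (n - m)"
        using \<open>i < m\<close> \<open>m < j\<close> i j by auto
    qed (use X0 \<open>y X0 i = 1\<close> \<open>y X0 j \<noteq> 1\<close> in auto)
    with y_sorted_input \<open>i < m\<close> show False by (simp add: indicator_input_def)
  qed
qed

definition adjacent_blocks :: "nat \<Rightarrow> network \<Rightarrow> nat \<Rightarrow> bool" where
  "adjacent_blocks n C k \<longleftrightarrow>
     (\<forall>(i, j)\<in>C ! (k - 1). \<forall>m. i < m \<and> m < j \<longrightarrow> m \<in> kblock n C k i \<or> m \<in> kblock n C k j)"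

lemma later_reach_interval:
  assumes net: "is_network n C"
    and adjacent: "\<forall>k'. k < k' \<and> k' \<le> length C \<longrightarrow> adjacent_blocks n C k'"
    and pq: "(p, q) \<in> later_reach C k"
  shows "min p q \<le> m \<Longrightarrow> m \<le> max p q \<Longrightarrow> (p, m) \<in> later_reach C k"
  using pq
proof (induction arbitrary: m rule: rtrancl_induct)
  case base
  then show ?case by simp
next
  case (step q r)
  obtain u v where uv: "(u, v) \<in> later_edges C k" "{u, v} = {q, r}"
    using step.hyps(2) by auto
  then obtain k' where "k' \<in> {k + 1..length C}" "(u, v) \<in> C ! (k' - 1)"
    unfolding later_edges_def by blast
  then have k': "k < k'" "k' \<le> length C" "(u, v) \<in> C ! (k' - 1)" by auto
  have "is_layer n (C ! (k' - 1))" using net k' by (simp add: is_network_def)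
  from is_layer_bounds(2)[OF this k'(3)] have "u < v" .
  have reach_uv: "(p, u) \<in> later_reach C k" "(p, v) \<in> later_reach C k"
    using uv(2) step.hyps(1,2) by (auto simp: doubleton_eq_iff intro: rtrancl_into_rtrancl)
  show ?case
  proof (cases "min p q \<le> m \<and> m \<le> max p q")
    case True
    then show ?thesis using step.IH by blast
  next
    case False
    with step.prems uv(2) \<open>u < v\<close> have "u \<le> m" "m \<le> v"
      by (auto simp: doubleton_eq_iff)
    then consider "m = u" | "m = v" | "u < m" "m < v" by linarith
    then show ?thesis
    proof cases
      case 3
      with adjacent k' have "m \<in> kblock n C k' u \<or> m \<in> kblock n C k' v"
        unfolding adjacent_blocks_def by blast
      moreover have "later_reach C k' \<subseteq> later_reach C k"
        using later_edges_antimono[of k k' C] k'(1) by (intro rtrancl_mono) auto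
      ultimately have "(u, m) \<in> later_reach C k \<or> (v, m) \<in> later_reach C k"
        unfolding kblock_def by blast
      with reach_uv show ?thesis by (blast intro: rtrancl_trans)
    qed (use reach_uv in simp_all)
  qed
qed

lemma adjacent_blocks_all:
  assumes sn: "sorting_network n C"
    and irredundant: "\<forall>l\<in>{1..length C}. \<forall>(i, j)\<in>C ! (l - 1). \<not> redundant n C l i j"
  shows "1 \<le> k \<Longrightarrow> k \<le> length C \<Longrightarrow> adjacent_blocks n C k"
proof (induction "length C - k" arbitrary: k rule: less_induct)
  case less
  have net: "is_network n C" using sn by (simp add: sorting_network_def)
  have later: "\<forall>k'. k < k' \<and> k' \<le> length C \<longrightarrow> adjacent_blocks n C k'"
    using less by auto
  have "m \<in> kblock n C k i \<or> m \<in> kblock n C k j"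
    if ij: "(i, j) \<in> C ! (k - 1)" and m: "i < m" "m < j" for i j m
  proof (rule ccontr)
    assume outside: "\<not> (m \<in> kblock n C k i \<or> m \<in> kblock n C k j)"
    have "is_layer n (C ! (k - 1))" using net less.prems by (simp add: is_network_def)
    with m is_layer_bounds[OF _ ij] have "m \<in> {1..n}" by fastforce
    with outside have unreached: "(i, m) \<notin> later_reach C k" "(j, m) \<notin> later_reach C k"
      by (auto simp: kblock_def)
    have "\<forall>c\<in>kblock n C k i. c < m"
      using later_reach_interval[OF net later, of i _ m] unreached(1) m by (force simp: kblock_def)
    moreover have "\<forall>c\<in>kblock n C k j. m < c"
      using later_reach_interval[OF net later, of j _ m] unreached(2) m by (force simp: kblock_def)
    ultimately have "redundant n C k i j"
      using separated_comparator_redundant[OF sn less.prems ij] by blast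
    with irredundant less.prems ij show False by auto
  qed
  then show ?case unfolding adjacent_blocks_def by blast
qed

theorem theorem2:
  fixes n :: nat and C :: network
  assumes "sorting_network n C"
    and "\<forall>l\<in>{1..length C}. \<forall>(i,j)\<in>C ! (l - 1). \<not> redundant n C l i j"
  shows "\<forall>k. 1 \<le> k \<and> k < length C \<longrightarrow>
           (\<forall>(i,j)\<in>C ! (k - 1). \<forall>m. i < m \<and> m < j \<longrightarrow>
              m \<in> kblock n C k i \<or> m \<in> kblock n C k j)"
  using adjacent_blocks_all[OF assms] unfolding adjacent_blocks_def by auto

end
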